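(* Let $m\in\mathbb N$, $p_1,\dots,p_m\in[1,\infty)$ with $1/p=\sum_{k=1}^m1/p_k$. Assume $\omega_1,\dots,\omega_m\in A_\infty$ and $v_{\vec\omega}=\prod_{i=1}^m\omega_i^{p/p_i}\in A_\infty$. Then for every ball $B\subseteq\mathbb R^n$, $$\prod_{i=1}^m\Big(\int_B\omega_i(x)\,dx\Big)^{p/p_i}\approx\int_Bv_{\vec\omega}(x)\,dx,$$ with implicit constants independent of $B$.
   Context: $A_\infty=\bigcup_{1\le p<\infty}A_p$, the union of the Muckenhoupt weight classes on $\mathbb R^n$. $A\approx B$ means $c^{-1}B\le A\le cB$ for a constant $c>0$. *)

theory Defs
  imports "HOL-Analysis.Analysis"
begin

definition weight :: "('a::euclidean_space \<Rightarrow> real) \<Rightarrow> bool" where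
  "weight w \<longleftrightarrow> w \<in> borel_measurable lebesgue \<and> (AE x in lebesgue. 0 < w x)
     \<and> (\<forall>x r. set_integrable lebesgue (cball x r) w)"

definition avg :: "'a::euclidean_space set \<Rightarrow> ('a \<Rightarrow> real) \<Rightarrow> real" where
  "avg B f = (LINT y:B|lebesgue. f y) / measure lebesgue B"

definition A_p :: "real \<Rightarrow> ('a::euclidean_space \<Rightarrow> real) \<Rightarrow> bool" where
  "A_p p w \<longleftrightarrow> weight w \<and>
     (if p = 1 then
        (\<exists>C. \<forall>x r. r > 0 \<longrightarrow> (AE y in lebesgue. y \<in> ball x r \<longrightarrow> avg (ball x r) w \<le> C * w y))
      else
        (\<forall>x r. set_integrable lebesgue (cball x r) (\<lambda>y. w y powr (-1 / (p - 1)))) \<and>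
        (\<exists>C. \<forall>x r. r > 0 \<longrightarrow>
           avg (ball x r) w * (avg (ball x r) (\<lambda>y. w y powr (-1 / (p - 1)))) powr (p - 1) \<le> C))"

definition A_infty :: "('a::euclidean_space \<Rightarrow> real) \<Rightarrow> bool" where
  "A_infty w \<longleftrightarrow> (\<exists>p. 1 \<le> p \<and> A_p p w)"

end

theory Submission
  imports Defs
begin

text \<open>Put \<open>\<theta> i = P / p i\<close>, so that the \<open>\<theta> i\<close> are nonnegative with sum 1, and
  \<open>v = (\<Prod>i. \<omega> i powr \<theta> i)\<close>. The bound \<open>\<integral>\<^sub>B v \<le> (\<Prod>i. (\<integral>\<^sub>B \<omega> i) powr \<theta> i)\<close> is Holder's
  inequality and needs no Muckenhoupt condition. Conversely, every \<open>A\<^sub>\<infinity>\<close> weight satisfies the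
  reverse Jensen inequality \<open>avg B w \<le> C * exp (avg B (ln w))\<close> on balls (for \<open>A\<^sub>1\<close> directly, for
  \<open>A\<^sub>p\<close> by Jensen's inequality applied to \<open>w powr (-1 / (p - 1))\<close>). Taking the weighted product
  gives \<open>(\<Prod>i. avg B (\<omega> i) powr \<theta> i) \<le> C' * exp (avg B (ln v)) \<le> C' * avg B v\<close>, the last step
  by Jensen's inequality once more.\<close>

lemma set_integrable_const_fmeasurable:
  assumes "B \<in> fmeasurable M"
  shows "set_integrable M B (\<lambda>_. c :: real)"
  using assms unfolding set_integrable_def fmeasurable_def
  by (simp add: integrable_mult_left)

lemma set_integrable_sum:
  fixes f :: "'i \<Rightarrow> 'a \<Rightarrow> real"
  assumes "\<And>i. i \<in> I \<Longrightarrow> set_integrable M B (f i)"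
  shows "set_integrable M B (\<lambda>y. \<Sum>i\<in>I. f i y)"
  using assms unfolding set_integrable_def by (simp add: sum_distrib_left)

lemma set_integral_sum:
  fixes f :: "'i \<Rightarrow> 'a \<Rightarrow> real"
  assumes "\<And>i. i \<in> I \<Longrightarrow> set_integrable M B (f i)"
  shows "(LINT y:B|M. \<Sum>i\<in>I. f i y) = (\<Sum>i\<in>I. LINT y:B|M. f i y)"
  using assms unfolding set_integrable_def set_lebesgue_integral_def
  by (simp add: sum_distrib_left integral_sum)

lemma set_integral_pos_AE:
  fixes f :: "'a \<Rightarrow> real"
  assumes "B \<in> sets M" "emeasure M B \<noteq> 0" "set_integrable M B f"
    and "AE y in M. y \<in> B \<longrightarrow> 0 < f y"
  shows "0 < (LINT y:B|M. f y)"
proof -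
  have nonneg: "AE y in M. 0 \<le> indicator B y *\<^sub>R f y"
    using assms(4) by eventually_elim (auto simp: indicator_def)
  have "(LINT y:B|M. f y) \<noteq> 0"
  proof
    assume "(LINT y:B|M. f y) = 0"
    then have "AE y in M. indicator B y *\<^sub>R f y = 0"
      using integral_nonneg_eq_0_iff_AE[OF assms(3)[unfolded set_integrable_def] nonneg]
      by (simp add: set_lebesgue_integral_def)
    then have "AE y in M. y \<notin> B"
      using assms(4) by eventually_elim (auto simp: indicator_def)
    moreover have "{y \<in> space M. y \<in> B} = B"
      using sets.sets_into_space[OF assms(1)] by blast
    ultimately show False
      using assms(2) AE_iff_measurable[OF assms(1)] by auto
  qed
  moreover have "0 \<le> (LINT y:B|M. f y)"
    unfolding set_lebesgue_integral_def using nonneg by (rule integral_nonneg_AE)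
  ultimately show ?thesis by simp
qed

lemma avg_nonneg_AE:
  assumes "AE y in lebesgue. y \<in> B \<longrightarrow> 0 \<le> f y"
  shows "0 \<le> avg B f"
proof -
  have "AE y in lebesgue. 0 \<le> indicator B y *\<^sub>R f y"
    using assms by eventually_elim (auto simp: indicator_def)
  then show ?thesis
    unfolding avg_def set_lebesgue_integral_def by (simp add: integral_nonneg_AE)
qed

lemma avg_const:
  assumes "B \<in> lmeasurable" "0 < measure lebesgue B"
  shows "avg B (\<lambda>_. c) = c"
proof -
  have "emeasure lebesgue B \<noteq> \<infinity>"
    using fmeasurableD2[OF assms(1)] by simp
  then show ?thesis
    using assms set_integral_const[OF fmeasurableD[OF assms(1)], of c] by (simp add: avg_def)
qed

lemma avg_mono_AE:
  assumes "set_integrable lebesgue B f" "set_integrable lebesgue B g"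
    and "AE y in lebesgue. y \<in> B \<longrightarrow> f y \<le> g y"
  shows "avg B f \<le> avg B g"
  unfolding avg_def by (intro divide_right_mono set_integral_mono_AE assms) simp

lemma avg_pos_AE:
  assumes "B \<in> lmeasurable" "0 < measure lebesgue B" "set_integrable lebesgue B f"
    and "AE y in lebesgue. y \<in> B \<longrightarrow> 0 < f y"
  shows "0 < avg B f"
proof -
  have "emeasure lebesgue B \<noteq> 0"
    using assms(2) by (auto simp: measure_def)
  then show ?thesis
    using set_integral_pos_AE[OF fmeasurableD[OF assms(1)] _ assms(3,4)] assms(2)
    by (simp add: avg_def)
qed

text \<open>Integrate the tangent line \<open>exp a * (1 + (t - a)) \<le> exp t\<close> at the average \<open>a\<close>.\<close>
lemma exp_avg_le_avg_exp:
  assumes B: "B \<in> lmeasurable" "0 < measure lebesgue B"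
    and f: "set_integrable lebesgue B f" "set_integrable lebesgue B (\<lambda>y. exp (f y))"
  shows "exp (avg B f) \<le> avg B (\<lambda>y. exp (f y))"
proof -
  define a where "a = avg B f"
  have tangent_int: "set_integrable lebesgue B (\<lambda>y. exp a * (1 - a) + exp a * f y)"
    using set_integrable_const_fmeasurable[OF B(1)] f(1) by (intro set_integral_add) auto
  have "avg B (\<lambda>y. exp a * (1 - a) + exp a * f y) = avg B (\<lambda>_. exp a * (1 - a)) + exp a * a"
    using set_integrable_const_fmeasurable[OF B(1)] f(1)
    by (simp add: avg_def a_def add_divide_distrib set_integral_add)
  also have "\<dots> = exp a * (1 - a) + exp a * a" using avg_const[OF B] by simp
  also have "\<dots> = exp a" by (simp add: algebra_simps)
  finally have "exp a = avg B (\<lambda>y. exp a * (1 - a) + exp a * f y)" ..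
  also have "\<dots> \<le> avg B (\<lambda>y. exp (f y))"
  proof (rule avg_mono_AE[OF tangent_int f(2)], intro AE_I2 impI)
    fix y
    have "exp a * (1 + (f y - a)) \<le> exp a * exp (f y - a)"
      by (intro mult_left_mono exp_ge_add_one_self) auto
    then show "exp a * (1 - a) + exp a * f y \<le> exp (f y)"
      by (simp add: exp_diff algebra_simps)
  qed
  finally show ?thesis unfolding a_def .
qed

lemma weighted_geometric_mean_le_arithmetic_mean:
  fixes x \<theta> :: "'i \<Rightarrow> real"
  assumes "finite S" "(\<Sum>i\<in>S. \<theta> i) = 1" "\<And>i. i \<in> S \<Longrightarrow> 0 \<le> \<theta> i"
    and "\<And>i. i \<in> S \<Longrightarrow> 0 \<le> x i"
  shows "(\<Prod>i\<in>S. x i powr \<theta> i) \<le> (\<Sum>i\<in>S. \<theta> i * x i)"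
proof (cases "\<exists>i\<in>S. x i = 0")
  case True
  then have "(\<Prod>i\<in>S. x i powr \<theta> i) = 0"
    using assms(1) by (auto intro: prod_zero)
  then show ?thesis
    using assms(3,4) by (simp add: sum_nonneg)
next
  case False
  with assms(4) have pos: "\<And>i. i \<in> S \<Longrightarrow> 0 < x i"
    by force
  have "x i powr \<theta> i = exp (\<theta> i * ln (x i))" if "i \<in> S" for i
    using pos[OF that] by (simp add: powr_def mult.commute)
  then have "(\<Prod>i\<in>S. x i powr \<theta> i) = exp (\<Sum>i\<in>S. \<theta> i *\<^sub>R ln (x i))"
    using assms(1) by (simp add: exp_sum)
  moreover have "exp (\<Sum>i\<in>S. \<theta> i *\<^sub>R ln (x i)) \<le> (\<Sum>i\<in>S. \<theta> i * exp (ln (x i)))"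
  proof (rule convex_on_sum[OF assms(1) _ exp_convex assms(2)])
    show "S \<noteq> {}" using assms(2) by auto
  qed (use assms(3) in auto)
  ultimately show ?thesis
    using pos by simp
qed

text \<open>Holder's inequality: integrate the weighted AM-GM inequality for the normalised
  functions \<open>f i / (\<integral>\<^sub>B f i)\<close>.\<close>
lemma
  fixes f :: "'i \<Rightarrow> 'a \<Rightarrow> real"
  assumes S: "finite S" "(\<Sum>i\<in>S. \<theta> i) = 1" "\<And>i. i \<in> S \<Longrightarrow> 0 \<le> \<theta> i"
    and B: "B \<in> sets M"
    and f: "\<And>i. i \<in> S \<Longrightarrow> f i \<in> borel_measurable M"
      "\<And>i. i \<in> S \<Longrightarrow> set_integrable M B (f i)"
      "\<And>i. i \<in> S \<Longrightarrow> AE y in M. y \<in> B \<longrightarrow> 0 \<le> f i y"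
      "\<And>i. i \<in> S \<Longrightarrow> 0 < (LINT y:B|M. f i y)"
  shows set_integrable_prod_powr: "set_integrable M B (\<lambda>y. \<Prod>i\<in>S. f i y powr \<theta> i)"
    and set_integral_prod_powr_le:
      "(LINT y:B|M. \<Prod>i\<in>S. f i y powr \<theta> i) \<le> (\<Prod>i\<in>S. (LINT y:B|M. f i y) powr \<theta> i)"
proof -
  define I where "I i = (LINT y:B|M. f i y)" for i
  define G where "G = (\<Prod>i\<in>S. I i powr \<theta> i)"
  define g where "g y = G * (\<Sum>i\<in>S. \<theta> i * (f i y / I i))" for y
  have g_int: "set_integrable M B g"
    unfolding g_def using f(2) by (intro set_integrable_mult_right set_integrable_sum) auto
  have "AE y in M. \<forall>i\<in>S. y \<in> B \<longrightarrow> 0 \<le> f i y"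
    using f(3) by (intro eventually_ball_finite S(1)) auto
  then have le_g: "AE y in M. y \<in> B \<longrightarrow> (\<Prod>i\<in>S. f i y powr \<theta> i) \<le> g y"
  proof eventually_elim
    case (elim y)
    show ?case
    proof
      assume "y \<in> B"
      with elim have nonneg: "\<And>i. i \<in> S \<Longrightarrow> 0 \<le> f i y / I i"
        using f(4) by (simp add: I_def less_imp_le)
      have "f i y powr \<theta> i = I i powr \<theta> i * (f i y / I i) powr \<theta> i" if "i \<in> S" for i
        using powr_mult[of "I i" "f i y / I i" "\<theta> i"] nonneg[OF that] f(4)[OF that]
        by (simp add: I_def less_imp_le)
      then have "(\<Prod>i\<in>S. f i y powr \<theta> i) = G * (\<Prod>i\<in>S. (f i y / I i) powr \<theta> i)"
        by (simp add: G_def prod.distrib)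
      also have "\<dots> \<le> g y"
        unfolding g_def using S nonneg
        by (intro mult_left_mono weighted_geometric_mean_le_arithmetic_mean)
          (auto simp: G_def prod_nonneg)
      finally show "(\<Prod>i\<in>S. f i y powr \<theta> i) \<le> g y" .
    qed
  qed
  have "(\<lambda>y. f i y powr \<theta> i) \<in> borel_measurable M" if "i \<in> S" for i
    using f(1)[OF that] by measurable
  then have "(\<lambda>y. \<Prod>i\<in>S. f i y powr \<theta> i) \<in> borel_measurable M"
    by (rule borel_measurable_prod)
  then have "set_borel_measurable M B (\<lambda>y. \<Prod>i\<in>S. f i y powr \<theta> i)"
    unfolding set_borel_measurable_def using B by measurable
  then show prod_int: "set_integrable M B (\<lambda>y. \<Prod>i\<in>S. f i y powr \<theta> i)"
    by (rule set_integrable_bound[OF g_int])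
      (use le_g in \<open>eventually_elim, auto simp: prod_nonneg\<close>)
  have "(LINT y:B|M. \<theta> i * (f i y / I i)) = \<theta> i" if "i \<in> S" for i
    using f(4)[OF that] by (simp add: I_def)
  then have "(LINT y:B|M. g y) = G * (\<Sum>i\<in>S. \<theta> i)"
    unfolding g_def using f(2) by (simp add: set_integral_sum)
  also have "\<dots> = G"
    using S(2) by simp
  finally have "(LINT y:B|M. g y) = G" .
  moreover have "(LINT y:B|M. \<Prod>i\<in>S. f i y powr \<theta> i) \<le> (LINT y:B|M. g y)"
    by (rule set_integral_mono_AE[OF prod_int g_int le_g])
  ultimately show "(LINT y:B|M. \<Prod>i\<in>S. f i y powr \<theta> i) \<le> (\<Prod>i\<in>S. (LINT y:B|M. f i y) powr \<theta> i)"
    by (simp add: G_def I_def)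
qed

lemma set_integrable_ln:
  fixes w h :: "'a \<Rightarrow> real"
  assumes "B \<in> sets M" "w \<in> borel_measurable M"
    and "set_integrable M B w" "set_integrable M B h"
    and "AE y in M. y \<in> B \<longrightarrow> 0 < w y \<and> - h y \<le> ln (w y)"
  shows "set_integrable M B (\<lambda>y. ln (w y))"
proof (rule set_integrable_bound)
  show "set_integrable M B (\<lambda>y. w y + \<bar>h y\<bar>)"
    using assms(3,4) by (intro set_integral_add set_integrable_abs)
  show "set_borel_measurable M B (\<lambda>y. ln (w y))"
    unfolding set_borel_measurable_def using assms(1,2) by measurable
  show "AE y in M. y \<in> B \<longrightarrow> norm (ln (w y)) \<le> norm (w y + \<bar>h y\<bar>)"
    using assms(5)
  proof eventually_elim
    case (elim y)
    show ?case
    proof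
      assume "y \<in> B"
      with elim have "0 < w y" "- h y \<le> ln (w y)" by auto
      moreover have "ln (w y) \<le> w y - 1"
        using \<open>0 < w y\<close> by (rule ln_le_minus_one)
      ultimately show "norm (ln (w y)) \<le> norm (w y + \<bar>h y\<bar>)"
        by auto
    qed
  qed
qed

lemma A_1_avg_le_exp_avg_ln:
  fixes w :: "'a::euclidean_space \<Rightarrow> real"
  assumes B: "B \<in> lmeasurable" "0 < measure lebesgue B"
    and w: "w \<in> borel_measurable lebesgue" "AE y in lebesgue. 0 < w y"
      "set_integrable lebesgue B w"
    and C: "0 < C" "AE y in lebesgue. y \<in> B \<longrightarrow> avg B w \<le> C * w y"
  shows "set_integrable lebesgue B (\<lambda>y. ln (w y))"
    and "avg B w \<le> C * exp (avg B (\<lambda>y. ln (w y)))"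
proof -
  define A where "A = avg B w"
  have "0 < A"
    unfolding A_def using w(2) by (intro avg_pos_AE B w(3)) auto
  have lower: "AE y in lebesgue. y \<in> B \<longrightarrow> 0 < w y \<and> ln (A / C) \<le> ln (w y)"
    using w(2) C(2)
  proof eventually_elim
    case (elim y)
    then show ?case
      using \<open>0 < A\<close> C(1) by (auto simp: A_def pos_divide_le_eq mult.commute)
  qed
  show ln_int: "set_integrable lebesgue B (\<lambda>y. ln (w y))"
    using lower set_integrable_const_fmeasurable[OF B(1)]
    by (intro set_integrable_ln[where h = "\<lambda>_. - ln (A / C)"] fmeasurableD[OF B(1)] w(1,3)) auto
  have "ln (A / C) = avg B (\<lambda>_. ln (A / C))"
    using avg_const[OF B] by simp
  also have "\<dots> \<le> avg B (\<lambda>y. ln (w y))"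
    using lower
    by (intro avg_mono_AE set_integrable_const_fmeasurable B(1) ln_int) (auto elim: AE_mp)
  finally have "A / C \<le> exp (avg B (\<lambda>y. ln (w y)))"
    using \<open>0 < A\<close> C(1) by (metis divide_pos_pos exp_le_cancel_iff exp_ln)
  then show "avg B w \<le> C * exp (avg B (\<lambda>y. ln (w y)))"
    using C(1) by (simp add: A_def pos_divide_le_eq mult.commute)
qed

text \<open>Jensen's inequality for \<open>w powr (-1 / (p - 1)) = exp (- ln w / (p - 1))\<close>.\<close>
lemma A_p_exp_neg_avg_ln_le:
  fixes w :: "'a::euclidean_space \<Rightarrow> real"
  assumes p: "1 < p"
    and B: "B \<in> lmeasurable" "0 < measure lebesgue B"
    and w: "w \<in> borel_measurable lebesgue" "AE y in lebesgue. 0 < w y"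
      "set_integrable lebesgue B w"
    and dual: "set_integrable lebesgue B (\<lambda>y. w y powr (-1 / (p - 1)))"
  shows "set_integrable lebesgue B (\<lambda>y. ln (w y))"
    and "exp (- avg B (\<lambda>y. ln (w y))) \<le> avg B (\<lambda>y. w y powr (-1 / (p - 1))) powr (p - 1)"
proof -
  define s where "s = 1 / (p - 1)"
  define u where "u y = w y powr (-1 / (p - 1))" for y
  have "0 < s" using p by (simp add: s_def)
  have u_exp: "AE y in lebesgue. 0 < w y \<and> u y = exp (- s * ln (w y))"
    using w(2) by eventually_elim (simp add: u_def s_def powr_def)
  have lower: "AE y in lebesgue. y \<in> B \<longrightarrow> 0 < w y \<and> - (u y / s) \<le> ln (w y)"
    using u_exp
  proof eventually_elim
    case (elim y)
    have "1 + (- s * ln (w y)) \<le> u y"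
      using elim exp_ge_add_one_self[of "- s * ln (w y)"] by simp
    then have "- u y \<le> s * ln (w y)" by linarith
    then show ?case
      using elim \<open>0 < s\<close> by (auto simp: field_simps)
  qed
  show ln_int: "set_integrable lebesgue B (\<lambda>y. ln (w y))"
    using lower dual unfolding u_def[symmetric]
    by (intro set_integrable_ln[where h = "\<lambda>y. u y / s"] fmeasurableD[OF B(1)] w(1,3)
        set_integrable_divide)
  have u_meas: "u \<in> borel_measurable lebesgue"
    unfolding u_def using w(1) by measurable
  have exp_ae: "AE y in lebesgue. y \<in> B \<longrightarrow> exp (- s * ln (w y)) = u y"
    using u_exp by eventually_elim simp
  have exp_int: "set_integrable lebesgue B (\<lambda>y. exp (- s * ln (w y)))"
    using dual set_integrable_cong_AE[OF _ u_meas exp_ae fmeasurableD[OF B(1)]] w(1)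
    unfolding u_def by (simp add: measurable_compose[OF _ borel_measurable_exp])
  have "avg B (\<lambda>y. - s * ln (w y)) = - s * avg B (\<lambda>y. ln (w y))"
    unfolding avg_def by (subst set_integral_mult_right) simp
  then have "exp (- s * avg B (\<lambda>y. ln (w y))) = exp (avg B (\<lambda>y. - s * ln (w y)))"
    by simp
  also have "\<dots> \<le> avg B (\<lambda>y. exp (- s * ln (w y)))"
    by (rule exp_avg_le_avg_exp[OF B set_integrable_mult_right[OF ln_int] exp_int])
  also have "\<dots> = avg B u"
    unfolding avg_def using exp_ae w(1) u_meas B(1)
    by (subst set_lebesgue_integral_cong_AE[where g = u]) auto
  finally have "exp (- s * avg B (\<lambda>y. ln (w y))) \<le> avg B u" .
  then have "exp (- s * avg B (\<lambda>y. ln (w y))) powr (p - 1) \<le> avg B u powr (p - 1)"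
    using p by (intro powr_mono2) auto
  moreover have "exp (- s * avg B (\<lambda>y. ln (w y))) powr (p - 1) = exp (- avg B (\<lambda>y. ln (w y)))"
    using p by (simp add: powr_def s_def)
  ultimately show "exp (- avg B (\<lambda>y. ln (w y))) \<le> avg B (\<lambda>y. w y powr (-1 / (p - 1))) powr (p - 1)"
    by (simp add: u_def[abs_def])
qed

lemma measure_ball_pos:
  fixes x :: "'a::euclidean_space"
  assumes "0 < r"
  shows "0 < measure lebesgue (ball x r)"
  using content_ball_pos[OF assms, of x] by simp

lemma weight_set_integrable_ball:
  assumes "weight w"
  shows "set_integrable lebesgue (ball x r) w"
  using assms unfolding weight_def
  by (meson ball_subset_cball fmeasurableD lmeasurable_ball set_integrable_subset)

lemma A_infty_weight: "A_infty w \<Longrightarrow> weight w"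
  unfolding A_infty_def A_p_def by blast

lemma A_infty_avg_le_exp_avg_ln:
  fixes w :: "'a::euclidean_space \<Rightarrow> real"
  assumes "A_infty w"
  shows "\<exists>C>0. \<forall>x r. 0 < r \<longrightarrow> set_integrable lebesgue (ball x r) (\<lambda>y. ln (w y))
           \<and> avg (ball x r) w \<le> C * exp (avg (ball x r) (\<lambda>y. ln (w y)))"
proof -
  obtain p where p: "1 \<le> p" "A_p p w"
    using assms unfolding A_infty_def by blast
  have wt: "weight w"
    using assms by (rule A_infty_weight)
  then have w: "w \<in> borel_measurable lebesgue" "AE y in lebesgue. 0 < w y"
    unfolding weight_def by auto
  note ball = lmeasurable_ball measure_ball_pos w weight_set_integrable_ball[OF wt]
  show ?thesis
  proof (cases "p = 1")
    case True
    then obtain C0 where C0: "\<And>x r. 0 < r \<Longrightarrow>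
        AE y in lebesgue. y \<in> ball x r \<longrightarrow> avg (ball x r) w \<le> C0 * w y"
      using p(2) unfolding A_p_def by auto
    define C where "C = max C0 1"
    have C_bound: "AE y in lebesgue. y \<in> ball x r \<longrightarrow> avg (ball x r) w \<le> C * w y"
      if "0 < r" for x r
      using C0[OF that] w(2)
    proof (eventually_elim, intro impI)
      fix y assume y: "y \<in> ball x r \<longrightarrow> avg (ball x r) w \<le> C0 * w y" "0 < w y" "y \<in> ball x r"
      have "C0 * w y \<le> C * w y"
        using y(2) by (intro mult_right_mono) (auto simp: C_def)
      with y(1,3) show "avg (ball x r) w \<le> C * w y"
        by (blast intro: order_trans)
    qed
    have "0 < C" by (simp add: C_def)
    with A_1_avg_le_exp_avg_ln[OF ball(1,2) ball(3-5) _ C_bound] show ?thesis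
      by blast
  next
    case False
    with p(1) have "1 < p" by simp
    obtain C0 where
      dual: "\<And>x r. set_integrable lebesgue (cball x r) (\<lambda>y. w y powr (-1 / (p - 1)))" and
      C0: "\<And>x r. 0 < r \<Longrightarrow>
        avg (ball x r) w * avg (ball x r) (\<lambda>y. w y powr (-1 / (p - 1))) powr (p - 1) \<le> C0"
      using p(2) False unfolding A_p_def by auto
    define C where "C = max C0 1"
    have "set_integrable lebesgue (ball x r) (\<lambda>y. ln (w y))
        \<and> avg (ball x r) w \<le> C * exp (avg (ball x r) (\<lambda>y. ln (w y)))" if "0 < r" for x r
    proof -
      have "set_integrable lebesgue (ball x r) (\<lambda>y. w y powr (-1 / (p - 1)))"
        using dual by (meson ball_subset_cball fmeasurableD lmeasurable_ball set_integrable_subset)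
      note Jensen = A_p_exp_neg_avg_ln_le[OF \<open>1 < p\<close> ball(1) ball(2)[OF that] ball(3-5) this]
      have "0 \<le> avg (ball x r) w"
        using w(2) by (intro avg_nonneg_AE) (auto elim: AE_mp)
      then have "avg (ball x r) w * exp (- avg (ball x r) (\<lambda>y. ln (w y))) \<le> C0"
        using Jensen(2) C0[OF that] by (meson mult_left_mono order_trans)
      then have "avg (ball x r) w * exp (- avg (ball x r) (\<lambda>y. ln (w y))) \<le> C"
        by (simp add: C_def)
      then show ?thesis
        using Jensen(1) by (simp add: exp_minus field_simps)
    qed
    then show ?thesis
      by (intro exI[of _ C]) (auto simp: C_def)
  qed
qed

lemma prod_mult_powr_sum_eq_1:
  fixes a \<theta> :: "'i \<Rightarrow> real"
  assumes "finite S" "(\<Sum>i\<in>S. \<theta> i) = 1" "0 < c"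
  shows "(\<Prod>i\<in>S. (c * a i) powr \<theta> i) = c * (\<Prod>i\<in>S. a i powr \<theta> i)"
proof -
  have "(\<Prod>i\<in>S. c powr \<theta> i) = c"
    using powr_sum[of c \<theta> S] assms by simp
  then show ?thesis
    by (simp add: powr_mult prod.distrib)
qed

lemma exp_sum_avg_ln_le_avg_prod_powr:
  fixes \<omega> :: "'i \<Rightarrow> 'a::euclidean_space \<Rightarrow> real"
  assumes S: "finite S"
    and B: "B \<in> lmeasurable" "0 < measure lebesgue B"
    and \<omega>: "\<And>i. i \<in> S \<Longrightarrow> \<omega> i \<in> borel_measurable lebesgue"
      "\<And>i. i \<in> S \<Longrightarrow> AE y in lebesgue. 0 < \<omega> i y"
      "\<And>i. i \<in> S \<Longrightarrow> set_integrable lebesgue B (\<lambda>y. ln (\<omega> i y))"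
    and prod_int: "set_integrable lebesgue B (\<lambda>y. \<Prod>i\<in>S. \<omega> i y powr \<theta> i)"
  shows "exp (\<Sum>i\<in>S. \<theta> i * avg B (\<lambda>y. ln (\<omega> i y))) \<le> avg B (\<lambda>y. \<Prod>i\<in>S. \<omega> i y powr \<theta> i)"
proof -
  define f where "f y = (\<Sum>i\<in>S. \<theta> i * ln (\<omega> i y))" for y
  have f_int: "set_integrable lebesgue B f"
    unfolding f_def using \<omega>(3) by (intro set_integrable_sum set_integrable_mult_right)
  have avg_f: "avg B f = (\<Sum>i\<in>S. \<theta> i * avg B (\<lambda>y. ln (\<omega> i y)))"
    unfolding avg_def f_def using \<omega>(3) by (simp add: set_integral_sum sum_divide_distrib)
  have "AE y in lebesgue. \<forall>i\<in>S. 0 < \<omega> i y"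
    using \<omega>(2) by (intro eventually_ball_finite S) auto
  then have exp_f: "AE y in lebesgue. y \<in> B \<longrightarrow> exp (f y) = (\<Prod>i\<in>S. \<omega> i y powr \<theta> i)"
    by eventually_elim (auto simp: f_def exp_sum[OF S] powr_def mult.commute intro!: prod.cong)
  have meas: "(\<lambda>y. exp (f y)) \<in> borel_measurable lebesgue"
    "(\<lambda>y. \<Prod>i\<in>S. \<omega> i y powr \<theta> i) \<in> borel_measurable lebesgue"
    using \<omega>(1) by (auto simp: f_def intro!: borel_measurable_prod borel_measurable_sum)
  have "set_integrable lebesgue B (\<lambda>y. exp (f y))"
    using set_integrable_cong_AE[OF meas exp_f fmeasurableD[OF B(1)]] prod_int by simp
  then have "exp (avg B f) \<le> avg B (\<lambda>y. exp (f y))"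
    by (rule exp_avg_le_avg_exp[OF B f_int])
  also have "\<dots> = avg B (\<lambda>y. \<Prod>i\<in>S. \<omega> i y powr \<theta> i)"
    unfolding avg_def using set_lebesgue_integral_cong_AE[OF fmeasurableD[OF B(1)] meas exp_f]
    by simp
  finally show ?thesis
    unfolding avg_f .
qed

lemma prod_set_integral_powr_le:
  fixes \<omega> :: "'i \<Rightarrow> 'a::euclidean_space \<Rightarrow> real"
  assumes S: "finite S" "(\<Sum>i\<in>S. \<theta> i) = 1" "\<And>i. i \<in> S \<Longrightarrow> 0 \<le> \<theta> i"
    and B: "B \<in> lmeasurable" "0 < measure lebesgue B"
    and \<omega>: "\<And>i. i \<in> S \<Longrightarrow> \<omega> i \<in> borel_measurable lebesgue"
      "\<And>i. i \<in> S \<Longrightarrow> AE y in lebesgue. 0 < \<omega> i y"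
      "\<And>i. i \<in> S \<Longrightarrow> set_integrable lebesgue B (\<lambda>y. ln (\<omega> i y))"
    and C: "\<And>i. i \<in> S \<Longrightarrow> avg B (\<omega> i) \<le> C i * exp (avg B (\<lambda>y. ln (\<omega> i y)))"
    and prod_int: "set_integrable lebesgue B (\<lambda>y. \<Prod>i\<in>S. \<omega> i y powr \<theta> i)"
  shows "(\<Prod>i\<in>S. (LINT y:B|lebesgue. \<omega> i y) powr \<theta> i)
      \<le> (\<Prod>i\<in>S. C i powr \<theta> i) * (LINT y:B|lebesgue. \<Prod>i\<in>S. \<omega> i y powr \<theta> i)"
proof -
  define \<mu> where "\<mu> = measure lebesgue B"
  have avg_eq: "(LINT y:B|lebesgue. f y) = \<mu> * avg B f" for f :: "'a \<Rightarrow> real"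
    using B(2) by (simp add: avg_def \<mu>_def)
  have "(\<Prod>i\<in>S. avg B (\<omega> i) powr \<theta> i)
      \<le> (\<Prod>i\<in>S. (C i * exp (avg B (\<lambda>y. ln (\<omega> i y)))) powr \<theta> i)"
  proof (intro prod_mono conjI)
    fix i assume "i \<in> S"
    have "0 \<le> avg B (\<omega> i)"
      using \<omega>(2)[OF \<open>i \<in> S\<close>] by (intro avg_nonneg_AE) (auto elim: AE_mp)
    then show "avg B (\<omega> i) powr \<theta> i \<le> (C i * exp (avg B (\<lambda>y. ln (\<omega> i y)))) powr \<theta> i"
      using C[OF \<open>i \<in> S\<close>] S(3)[OF \<open>i \<in> S\<close>] by (rule powr_mono2[rotated])
  qed simp
  also have "\<dots> = (\<Prod>i\<in>S. C i powr \<theta> i) * exp (\<Sum>i\<in>S. \<theta> i * avg B (\<lambda>y. ln (\<omega> i y)))"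
    using S(1) by (simp add: powr_mult exp_powr_real prod.distrib exp_sum mult.commute)
  also have "\<dots> \<le> (\<Prod>i\<in>S. C i powr \<theta> i) * avg B (\<lambda>y. \<Prod>i\<in>S. \<omega> i y powr \<theta> i)"
    using exp_sum_avg_ln_le_avg_prod_powr[OF S(1) B \<omega> prod_int]
    by (intro mult_left_mono) (auto intro: prod_nonneg)
  finally have "\<mu> * (\<Prod>i\<in>S. avg B (\<omega> i) powr \<theta> i)
      \<le> \<mu> * ((\<Prod>i\<in>S. C i powr \<theta> i) * avg B (\<lambda>y. \<Prod>i\<in>S. \<omega> i y powr \<theta> i))"
    using B(2) by (simp add: \<mu>_def)
  then show ?thesis
    using prod_mult_powr_sum_eq_1[OF S(1,2), of \<mu>] B(2)
    by (simp add: avg_eq \<mu>_def algebra_simps)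
qed

lemma A_infty_prod_powr_set_integral_equiv:
  fixes \<omega> :: "'i \<Rightarrow> 'a::euclidean_space \<Rightarrow> real"
  assumes S: "finite S" "(\<Sum>i\<in>S. \<theta> i) = 1" "\<And>i. i \<in> S \<Longrightarrow> 0 \<le> \<theta> i"
    and A: "\<And>i. i \<in> S \<Longrightarrow> A_infty (\<omega> i)"
  shows "\<exists>c>0. \<forall>x r. 0 < r \<longrightarrow>
     (\<Prod>i\<in>S. (LINT y:ball x r|lebesgue. \<omega> i y) powr \<theta> i)
        \<le> c * (LINT y:ball x r|lebesgue. \<Prod>i\<in>S. \<omega> i y powr \<theta> i)
   \<and> (LINT y:ball x r|lebesgue. \<Prod>i\<in>S. \<omega> i y powr \<theta> i)
        \<le> c * (\<Prod>i\<in>S. (LINT y:ball x r|lebesgue. \<omega> i y) powr \<theta> i)"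
proof -
  have "\<forall>i\<in>S. \<exists>C. \<forall>x r. 0 < r \<longrightarrow> set_integrable lebesgue (ball x r) (\<lambda>y. ln (\<omega> i y))
      \<and> avg (ball x r) (\<omega> i) \<le> C * exp (avg (ball x r) (\<lambda>y. ln (\<omega> i y)))"
    using A_infty_avg_le_exp_avg_ln[OF A] by blast
  then obtain C where C: "\<forall>i\<in>S. \<forall>x r. 0 < r \<longrightarrow>
      set_integrable lebesgue (ball x r) (\<lambda>y. ln (\<omega> i y))
      \<and> avg (ball x r) (\<omega> i) \<le> C i * exp (avg (ball x r) (\<lambda>y. ln (\<omega> i y)))"
    by (rule bchoice[THEN exE])
  define c where "c = max (\<Prod>i\<in>S. C i powr \<theta> i) 1"
  have wt: "\<And>i. i \<in> S \<Longrightarrow> weight (\<omega> i)"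
    using A by (rule A_infty_weight)
  then have \<omega>: "\<And>i. i \<in> S \<Longrightarrow> \<omega> i \<in> borel_measurable lebesgue"
    "\<And>i. i \<in> S \<Longrightarrow> AE y in lebesgue. 0 < \<omega> i y"
    unfolding weight_def by auto
  have "(\<Prod>i\<in>S. (LINT y:ball x r|lebesgue. \<omega> i y) powr \<theta> i)
        \<le> c * (LINT y:ball x r|lebesgue. \<Prod>i\<in>S. \<omega> i y powr \<theta> i)
      \<and> (LINT y:ball x r|lebesgue. \<Prod>i\<in>S. \<omega> i y powr \<theta> i)
        \<le> c * (\<Prod>i\<in>S. (LINT y:ball x r|lebesgue. \<omega> i y) powr \<theta> i)" if "0 < r" for x r
  proof -
    note B = lmeasurable_ball[of x r] measure_ball_pos[OF that, of x]
    have pos: "AE y in lebesgue. y \<in> ball x r \<longrightarrow> 0 < \<omega> i y" if "i \<in> S" for i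
      using \<omega>(2)[OF that] by (rule eventually_mono) simp
    have nonneg: "AE y in lebesgue. y \<in> ball x r \<longrightarrow> 0 \<le> \<omega> i y" if "i \<in> S" for i
      using pos[OF that] by (rule eventually_mono) auto
    have int_pos: "0 < (LINT y:ball x r|lebesgue. \<omega> i y)" if "i \<in> S" for i
      using B(2) by (intro set_integral_pos_AE fmeasurableD[OF B(1)] weight_set_integrable_ball
          wt pos that) (auto simp: measure_def)
    have prod_int: "set_integrable lebesgue (ball x r) (\<lambda>y. \<Prod>i\<in>S. \<omega> i y powr \<theta> i)"
      and upper: "(LINT y:ball x r|lebesgue. \<Prod>i\<in>S. \<omega> i y powr \<theta> i)
        \<le> (\<Prod>i\<in>S. (LINT y:ball x r|lebesgue. \<omega> i y) powr \<theta> i)"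
      using S \<omega>(1) nonneg int_pos weight_set_integrable_ball[OF wt] fmeasurableD[OF B(1)]
      by (intro set_integrable_prod_powr set_integral_prod_powr_le; simp)+
    have "set_integrable lebesgue (ball x r) (\<lambda>y. ln (\<omega> i y))"
      and "avg (ball x r) (\<omega> i) \<le> C i * exp (avg (ball x r) (\<lambda>y. ln (\<omega> i y)))"
      if "i \<in> S" for i
      using C that \<open>0 < r\<close> by blast+
    then have lower: "(\<Prod>i\<in>S. (LINT y:ball x r|lebesgue. \<omega> i y) powr \<theta> i)
        \<le> (\<Prod>i\<in>S. C i powr \<theta> i) * (LINT y:ball x r|lebesgue. \<Prod>i\<in>S. \<omega> i y powr \<theta> i)"
      using prod_set_integral_powr_le[OF S B \<omega>(1,2) _ _ prod_int] by blast
    have "0 \<le> (LINT y:ball x r|lebesgue. \<Prod>i\<in>S. \<omega> i y powr \<theta> i)"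
      unfolding set_lebesgue_integral_def by (intro integral_nonneg_AE AE_I2) (simp add: prod_nonneg)
    then have "(\<Prod>i\<in>S. C i powr \<theta> i) * (LINT y:ball x r|lebesgue. \<Prod>i\<in>S. \<omega> i y powr \<theta> i)
        \<le> c * (LINT y:ball x r|lebesgue. \<Prod>i\<in>S. \<omega> i y powr \<theta> i)"
      by (intro mult_right_mono) (simp_all add: c_def)
    moreover have "(\<Prod>i\<in>S. (LINT y:ball x r|lebesgue. \<omega> i y) powr \<theta> i)
        \<le> c * (\<Prod>i\<in>S. (LINT y:ball x r|lebesgue. \<omega> i y) powr \<theta> i)" (is "?P \<le> _")
      using mult_right_mono[of 1 c ?P] by (simp add: c_def prod_nonneg)
    ultimately show ?thesis
      using upper lower by linarith
  qed
  moreover have "0 < c" by (simp add: c_def)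
  ultimately show ?thesis by blast
qed

theorem lemma2p2:
  fixes m :: nat and p :: "nat \<Rightarrow> real" and P :: real
    and \<omega> :: "nat \<Rightarrow> 'a::euclidean_space \<Rightarrow> real"
  assumes "m \<ge> 1"
    and "\<forall>i<m. 1 \<le> p i"
    and "1 / P = (\<Sum>i<m. 1 / p i)"
    and "\<forall>i<m. A_infty (\<omega> i)"
    and "A_infty (\<lambda>x. \<Prod>i<m. \<omega> i x powr (P / p i))"
  shows "\<exists>c>0. \<forall>x r. r > 0 \<longrightarrow>
     (\<Prod>i<m. (LINT y:ball x r|lebesgue. \<omega> i y) powr (P / p i))
        \<le> c * (LINT y:ball x r|lebesgue. (\<Prod>i<m. \<omega> i y powr (P / p i)))
   \<and> (LINT y:ball x r|lebesgue. (\<Prod>i<m. \<omega> i y powr (P / p i)))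
        \<le> c * (\<Prod>i<m. (LINT y:ball x r|lebesgue. \<omega> i y) powr (P / p i))"
proof -
  have p_pos: "\<And>i. i < m \<Longrightarrow> 0 < p i"
    using assms(2) by (meson less_le_trans zero_less_one)
  then have "0 < (\<Sum>i<m. 1 / p i)"
    using assms(1) by (intro sum_pos) (auto simp: lessThan_empty_iff)
  then have "0 < P"
    using assms(3) by (metis zero_less_divide_1_iff)
  have "(\<Sum>i<m. P / p i) = P * (\<Sum>i<m. 1 / p i)"
    by (simp add: sum_distrib_left)
  also have "\<dots> = 1"
    using \<open>0 < P\<close> by (simp flip: assms(3))
  finally have "(\<Sum>i<m. P / p i) = 1" .
  moreover have "\<And>i. i \<in> {..<m} \<Longrightarrow> 0 \<le> P / p i"
    using \<open>0 < P\<close> p_pos by (simp add: less_imp_le)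
  ultimately show ?thesis
    using A_infty_prod_powr_set_integral_equiv[of "{..<m}" "\<lambda>i. P / p i" \<omega>] assms(4) by simp
qed

end
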